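(* Let $(\xi_j)_{j\ge 0}$ be independent, identically distributed random variables taking values in $\{-1,0,1\}$ with $\max_{x\in\{-1,0,1\}} \mathbb{P}(\xi_0 = x) < \frac{1}{\sqrt{3}}$, and for $n\ge 1$ let $P(z):=\sum_{j=0}^n \xi_j z^j$. For every algebraic integer $\alpha\neq 0$, \[\mathbb{P}(\alpha\text{ is a root of } P)\le \exp\left(-\frac{n\log 3}{2\lceil \log 3 /|\log|\alpha||\rceil}\right).\]
   Context: When $|\alpha|=1$ the right-hand side is interpreted as $1$ (the ceiling being infinite). *)

theory Defs
  imports "HOL-Analysis.Analysis" "HOL-Probability.Probability" "HOL-Computational_Algebra.Polynomial"
begin

end

theory Submission
  imports Defs
begin

text \<open>
  Put \<open>k = \<lceil>ln 3 / \<bar>ln \<bar>\<alpha>\<bar>\<bar>\<rceil>\<close>, so that \<open>\<beta> = \<alpha>^k\<close> satisfies \<open>\<bar>\<beta>\<bar> \<ge> 3\<close> or \<open>\<bar>\<beta>\<bar> \<le> 1/3\<close>.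
  For such \<open>\<beta>\<close> a relation \<open>\<Sum> d\<^sub>i \<beta>\<^sup>i = 0\<close> with integer digits \<open>\<bar>d\<^sub>i\<bar> \<le> 2\<close> forces all
  \<open>d\<^sub>i = 0\<close>, because the nonzero term of highest (resp. lowest) degree dominates the rest.
  Applied to the difference of two \<open>{-1,0,1}\<close>-valued coefficient vectors, this shows that once
  the coefficients at positions outside \<open>0, k, 2k, \<dots>, \<lfloor>n/k\<rfloor>k\<close> are fixed, at most one choice
  of the remaining \<open>\<lfloor>n/k\<rfloor> + 1\<close> coefficients makes \<open>\<alpha>\<close> a root. Conditioning on the former,
  the probability is at most \<open>(1/\<surd>3)^(\<lfloor>n/k\<rfloor>+1) \<le> 3^(-n/(2k))\<close>.
\<close>

lemma two_geometric_sum_le: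
  fixes r :: real
  assumes "r \<ge> 3"
  shows "2 * (\<Sum>i<m. r ^ i) \<le> r ^ m - 1"
proof (induction m)
  case (Suc m)
  have "1 \<le> r ^ m"
    using assms by (simp add: one_le_power)
  then have "3 * r ^ m \<le> r * r ^ m"
    using assms by (simp add: mult_right_mono)
  with Suc show ?case
    by simp
qed simp

lemma balanced_digits_zero_if_norm_ge_3:
  fixes \<beta> :: "'a :: real_normed_div_algebra" and d :: "nat \<Rightarrow> int"
  assumes "3 \<le> norm \<beta>" "\<forall>i\<le>m. \<bar>d i\<bar> \<le> 2" "(\<Sum>i\<le>m. of_int (d i) * \<beta> ^ i) = 0"
  shows "\<forall>i\<le>m. d i = 0"
  using assms(2,3)
proof (induction m)
  case (Suc m)
  let ?r = "norm \<beta>"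
  let ?low = "\<Sum>i\<le>m. of_int (d i) * \<beta> ^ i"
  have "norm ?low \<le> (\<Sum>i\<le>m. 2 * ?r ^ i)"
  proof (rule order_trans[OF norm_sum sum_mono])
    fix i assume "i \<in> {..m}"
    then have "\<bar>d i\<bar> \<le> 2"
      using Suc.prems(1) by simp
    then have "real_of_int \<bar>d i\<bar> \<le> 2"
      by linarith
    then show "norm (of_int (d i) * \<beta> ^ i) \<le> 2 * ?r ^ i"
      by (simp add: norm_mult norm_power mult_right_mono)
  qed
  also have "\<dots> = 2 * (\<Sum>i<Suc m. ?r ^ i)"
    by (simp add: sum_distrib_left lessThan_Suc_atMost)
  also have "\<dots> \<le> ?r ^ Suc m - 1"
    using two_geometric_sum_le[OF assms(1)] .
  finally have low_small: "norm ?low < ?r ^ Suc m"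
    by linarith
  have top: "d (Suc m) = 0"
  proof (rule ccontr)
    assume "d (Suc m) \<noteq> 0"
    then have "1 \<le> real_of_int \<bar>d (Suc m)\<bar>"
      by linarith
    have "?low = - (of_int (d (Suc m)) * \<beta> ^ Suc m)"
      using Suc.prems(2) by (simp add: add_eq_0_iff)
    then have "norm ?low = real_of_int \<bar>d (Suc m)\<bar> * ?r ^ Suc m"
      by (simp add: norm_mult norm_power)
    also have "\<dots> \<ge> ?r ^ Suc m"
      using mult_right_mono[OF \<open>1 \<le> real_of_int \<bar>d (Suc m)\<bar>\<close>, of "?r ^ Suc m"] by simp
    finally show False
      using low_small by linarith
  qed
  have "\<forall>i\<le>m. d i = 0"
    using Suc.IH Suc.prems top by simp
  with top show ?case
    by (simp add: le_Suc_eq)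
qed simp

text \<open>The case \<open>\<bar>\<beta>\<bar> \<le> 1/3\<close> reduces to the previous one by reversing the digits.\<close>

lemma balanced_digits_zero:
  fixes \<beta> :: "'a :: real_normed_field" and d :: "nat \<Rightarrow> int"
  assumes "3 \<le> norm \<beta> \<or> norm \<beta> \<le> 1/3" "\<beta> \<noteq> 0"
    and "\<forall>i\<le>m. \<bar>d i\<bar> \<le> 2" "(\<Sum>i\<le>m. of_int (d i) * \<beta> ^ i) = 0"
  shows "\<forall>i\<le>m. d i = 0"
  using assms(1)
proof
  assume "norm \<beta> \<le> 1/3"
  define \<gamma> where "\<gamma> = inverse \<beta>"
  have "norm \<gamma> = 1 / norm \<beta>"
    by (simp add: \<gamma>_def norm_inverse divide_inverse)
  then have "3 \<le> norm \<gamma>"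
    using \<open>norm \<beta> \<le> 1/3\<close> assms(2) by (simp add: le_divide_eq mult.commute)
  have "(\<Sum>i\<le>m. of_int (d (m - i)) * \<gamma> ^ i) = (\<Sum>i\<le>m. of_int (d i) * \<gamma> ^ (m - i))"
    using sum.atLeastAtMost_rev[of "\<lambda>i. of_int (d (m - i)) * \<gamma> ^ i" 0 m]
    by (simp add: atMost_atLeast0)
  also have "\<dots> = \<gamma> ^ m * (\<Sum>i\<le>m. of_int (d i) * \<beta> ^ i)"
    unfolding sum_distrib_left
  proof (rule sum.cong[OF refl])
    fix i assume "i \<in> {..m}"
    then have "\<gamma> ^ (m - i) = \<gamma> ^ m * \<beta> ^ i"
      using assms(2) by (simp add: \<gamma>_def power_diff divide_inverse power_inverse)
    then show "of_int (d i) * \<gamma> ^ (m - i) = \<gamma> ^ m * (of_int (d i) * \<beta> ^ i)"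
      by (simp add: mult_ac)
  qed
  also have "\<dots> = 0"
    using assms(4) by simp
  finally have reversed_sum: "(\<Sum>i\<le>m. of_int (d (m - i)) * \<gamma> ^ i) = 0" .
  have reversed_bound: "\<forall>i\<le>m. \<bar>d (m - i)\<bar> \<le> 2"
    using assms(3) by simp
  have reversed_zero: "\<forall>i\<le>m. d (m - i) = 0"
    by (rule balanced_digits_zero_if_norm_ge_3[OF \<open>3 \<le> norm \<gamma>\<close> reversed_bound reversed_sum])
  show ?thesis
  proof (intro allI impI)
    fix i assume "i \<le> m"
    with reversed_zero[rule_format, of "m - i"] show "d i = 0"
      by simp
  qed
qed (rule balanced_digits_zero_if_norm_ge_3[OF _ assms(3,4)])

lemma measure_pmf_bind_le:
  assumes "\<And>x. x \<in> set_pmf M \<Longrightarrow> measure_pmf.prob (N x) A \<le> c"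
  shows "measure_pmf.prob (bind_pmf M N) A \<le> c"
proof -
  obtain x where "x \<in> set_pmf M"
    using set_pmf_not_empty[of M] by blast
  then have "0 \<le> c"
    using assms measure_nonneg[of "measure_pmf (N x)" A] by (meson order_trans)
  have "emeasure (bind_pmf M N) A = (\<integral>\<^sup>+y. emeasure (N y) A \<partial>M)"
    by simp
  also have "\<dots> \<le> (\<integral>\<^sup>+y. ennreal c \<partial>M)"
    by (intro nn_integral_mono_AE AE_pmfI) (simp add: measure_pmf.emeasure_eq_measure ennreal_leI assms)
  also have "\<dots> = ennreal c"
    by simp
  finally show ?thesis
    using \<open>0 \<le> c\<close> by (simp add: measure_pmf.emeasure_eq_measure)
qed

lemma measure_pmf_le_if_subsingleton:
  assumes "\<And>x y. x \<in> A \<inter> set_pmf M \<Longrightarrow> y \<in> A \<inter> set_pmf M \<Longrightarrow> x = y"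
    and "\<And>x. pmf M x \<le> c"
  shows "measure_pmf.prob M A \<le> c"
proof (cases "A \<inter> set_pmf M = {}")
  case True
  then have "measure_pmf.prob M A = 0"
    by (metis measure_Int_set_pmf measure_empty)
  also have "\<dots> \<le> c"
    using assms(2)[of undefined] pmf_nonneg[of M undefined] by linarith
  finally show ?thesis .
next
  case False
  then obtain x where "A \<inter> set_pmf M = {x}"
    using assms(1) by blast
  then have "measure_pmf.prob M A = pmf M x"
    by (metis measure_Int_set_pmf measure_pmf_single)
  then show ?thesis
    using assms(2) by simp
qed

lemma pmf_Pi_pmf_le_power_card:
  assumes "finite S" "\<And>i x. i \<in> S \<Longrightarrow> pmf (P i) x \<le> c"
  shows "pmf (Pi_pmf S dflt P) f \<le> c ^ card S"
proof (cases "S = {}")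
  case False
  then obtain i where "i \<in> S"
    by blast
  then have "0 \<le> c"
    using assms(2)[of i undefined] pmf_nonneg[of "P i" undefined] by linarith
  have "(\<Prod>i\<in>S. pmf (P i) (f i)) \<le> (\<Prod>i\<in>S. c)"
    by (intro prod_mono) (simp add: assms(2))
  with \<open>0 \<le> c\<close> show ?thesis
    by (simp add: pmf_Pi[OF assms(1)])
qed (simp add: pmf_Pi)

text \<open>
  Condition on the coordinates in \<open>I - S\<close>: each fibre of \<open>E\<close> then meets the support of
  the product over \<open>S\<close> in at most one point.
\<close>

lemma measure_Pi_pmf_le_if_determined_outside:
  assumes "finite I" "S \<subseteq> I" "\<And>i x. i \<in> S \<Longrightarrow> pmf (P i) x \<le> c"
    and unique: "\<And>\<xi> \<eta>. \<xi> \<in> E \<inter> set_pmf (Pi_pmf I dflt P) \<Longrightarrow> \<eta> \<in> E \<inter> set_pmf (Pi_pmf I dflt P) \<Longrightarrow>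
                 (\<forall>i\<in>I - S. \<xi> i = \<eta> i) \<Longrightarrow> \<xi> = \<eta>"
  shows "measure_pmf.prob (Pi_pmf I dflt P) E \<le> c ^ card S"
proof -
  define T where "T = I - S"
  define glue where "glue = (\<lambda>(f, g) x. if x \<in> T then f x else g x :: 'b)"
  have "finite S" "finite T"
    using assms(1,2) finite_subset by (auto simp: T_def)
  have "T \<union> S = I" "T \<inter> S = {}"
    using assms(2) by (auto simp: T_def)
  then have I_split: "Pi_pmf I dflt P = map_pmf glue (pair_pmf (Pi_pmf T dflt P) (Pi_pmf S dflt P))"
    unfolding glue_def using Pi_pmf_union[OF \<open>finite T\<close> \<open>finite S\<close>] by metis
  have outside_S: "g x = dflt" if "g \<in> set_pmf (Pi_pmf S dflt P)" "x \<notin> S" for g x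
    using set_Pi_pmf_subset'[OF \<open>finite S\<close>, of dflt P] that by (auto simp: PiE_dflt_def)
  have fibre: "measure_pmf.prob (Pi_pmf S dflt P) ((\<lambda>g. glue (f, g)) -` E) \<le> c ^ card S"
    if "f \<in> set_pmf (Pi_pmf T dflt P)" for f
  proof (rule measure_pmf_le_if_subsingleton)
    fix g1 g2
    assume g1: "g1 \<in> (\<lambda>g. glue (f, g)) -` E \<inter> set_pmf (Pi_pmf S dflt P)"
      and g2: "g2 \<in> (\<lambda>g. glue (f, g)) -` E \<inter> set_pmf (Pi_pmf S dflt P)"
    have glue_eq: "glue (f, g1) = glue (f, g2)"
      using g1 g2 that by (intro unique) (auto simp: I_split glue_def T_def)
    have "g1 x = g2 x" for x
    proof (cases "x \<in> S")
      case True
      then show ?thesis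
        using fun_cong[OF glue_eq, of x] by (simp add: glue_def T_def)
    next
      case False
      then show ?thesis
        using g1 g2 outside_S by blast
    qed
    then show "g1 = g2" ..
  qed (rule pmf_Pi_pmf_le_power_card[OF \<open>finite S\<close> assms(3)])
  have "measure_pmf.prob (Pi_pmf I dflt P) E
      = measure_pmf.prob (pair_pmf (Pi_pmf T dflt P) (Pi_pmf S dflt P)) (glue -` E)"
    by (simp add: I_split)
  also have "\<dots> \<le> c ^ card S"
    unfolding pair_pmf_def map_pmf_def[symmetric]
    by (rule measure_pmf_bind_le) (simp add: fibre[unfolded vimage_def] vimage_def)
  finally show ?thesis .
qed

text \<open>The difference of the two coefficient vectors is a balanced-digit relation for \<open>\<alpha>^k\<close>.\<close>

lemma coeffs_eq_if_roots_agree_outside_multiples: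
  fixes \<alpha> :: "'a :: real_normed_field" and \<xi> \<eta> :: "nat \<Rightarrow> int"
  assumes "3 \<le> norm (\<alpha> ^ k) \<or> norm (\<alpha> ^ k) \<le> 1/3" "\<alpha> \<noteq> 0" "0 < k" "m * k \<le> n"
    and "\<forall>j\<le>n. \<xi> j \<in> {-1, 0, 1}" "\<forall>j\<le>n. \<eta> j \<in> {-1, 0, 1}"
    and "(\<Sum>j\<le>n. of_int (\<xi> j) * \<alpha> ^ j) = 0" "(\<Sum>j\<le>n. of_int (\<eta> j) * \<alpha> ^ j) = 0"
    and agree: "\<forall>j \<in> {..n} - (\<lambda>i. i * k) ` {..m}. \<xi> j = \<eta> j"
  shows "\<forall>j\<le>n. \<xi> j = \<eta> j"
proof -
  define S where "S = (\<lambda>i. i * k) ` {..m}"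
  define d where "d = (\<lambda>i. \<xi> (i * k) - \<eta> (i * k))"
  have "inj_on (\<lambda>i. i * k) {..m}"
    using assms(3) by (simp add: inj_on_def)
  have "S \<subseteq> {..n}"
    using assms(4) by (auto simp: S_def intro: order_trans[OF mult_le_mono1])
  have "(\<Sum>j\<le>n. of_int (\<xi> j - \<eta> j) * \<alpha> ^ j) = 0"
    using assms(7,8) by (simp add: algebra_simps sum_subtractf)
  also have "(\<Sum>j\<le>n. of_int (\<xi> j - \<eta> j) * \<alpha> ^ j) = (\<Sum>j\<in>S. of_int (\<xi> j - \<eta> j) * \<alpha> ^ j)"
    using \<open>S \<subseteq> {..n}\<close> agree by (intro sum.mono_neutral_right) (auto simp: S_def)
  also have "\<dots> = (\<Sum>i\<le>m. of_int (d i) * (\<alpha> ^ k) ^ i)"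
  proof -
    have "\<alpha> ^ (i * k) = (\<alpha> ^ k) ^ i" for i
      by (simp only: mult.commute[of i k] power_mult)
    then show ?thesis
      unfolding S_def d_def by (simp add: sum.reindex[OF \<open>inj_on (\<lambda>i. i * k) {..m}\<close>])
  qed
  finally have digits_sum: "(\<Sum>i\<le>m. of_int (d i) * (\<alpha> ^ k) ^ i) = 0" .
  have digits_bound: "\<forall>i\<le>m. \<bar>d i\<bar> \<le> 2"
  proof (intro allI impI)
    fix i assume "i \<le> m"
    then have "i * k \<le> n"
      using assms(4) by (meson mult_le_mono1 order_trans)
    then have "\<xi> (i * k) \<in> {-1, 0, 1}" "\<eta> (i * k) \<in> {-1, 0, 1}"
      using assms(5,6) by blast+
    then show "\<bar>d i\<bar> \<le> 2"
      by (auto simp: d_def)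
  qed
  have "\<forall>i\<le>m. d i = 0"
    using assms(2) by (intro balanced_digits_zero[OF assms(1) _ digits_bound digits_sum]) simp
  then have "\<forall>j\<in>S. \<xi> j = \<eta> j"
    by (auto simp: S_def d_def)
  with agree show ?thesis
    by (auto simp: S_def)
qed

lemma ge_or_le_inverse_if_ln_le_abs_ln_power:
  fixes x b :: real
  assumes "0 < x" "ln b \<le> real k * \<bar>ln x\<bar>"
  shows "b \<le> x ^ k \<or> x ^ k \<le> 1 / b"
proof (cases "0 < b")
  case True
  have "ln (x ^ k) = real k * ln x"
    using assms(1) by (simp add: ln_realpow)
  show ?thesis
  proof (cases "0 \<le> ln x")
    case True
    then have "ln b \<le> ln (x ^ k)"
      using assms(2) \<open>ln (x ^ k) = real k * ln x\<close> by simp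
    then show ?thesis
      using \<open>0 < b\<close> assms(1) by simp
  next
    case False
    then have "ln (x ^ k) \<le> ln (1 / b)"
      using assms(2) \<open>ln (x ^ k) = real k * ln x\<close> \<open>0 < b\<close> by (simp add: ln_div)
    then show ?thesis
      using \<open>0 < b\<close> assms(1) by simp
  qed
next
  case False
  then show ?thesis
    using assms(1) by (simp add: order_trans[of b 0])
qed

lemma power_Suc_div_le_powr:
  fixes c :: real
  assumes "0 < c" "c \<le> 1" "0 < k"
  shows "c ^ Suc (n div k) \<le> c powr (real n / real k)"
proof -
  have "n \<le> Suc (n div k) * k"
    using dividend_less_div_times[OF assms(3), of n] by simp
  then have "real n \<le> real (Suc (n div k)) * real k"
    by (metis of_nat_le_iff of_nat_mult)
  then have "real n / real k \<le> real (Suc (n div k))"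
    using assms(3) by (simp add: divide_le_eq)
  then have "c powr real (Suc (n div k)) \<le> c powr (real n / real k)"
    using assms(1,2) by (intro powr_mono') auto
  with assms(1) show ?thesis
    by (simp only: powr_realpow)
qed

lemma measure_root_le_power_Suc_div:
  fixes \<alpha> :: "'a :: real_normed_field" and p :: "int pmf"
  assumes "set_pmf p \<subseteq> {-1, 0, 1}" "\<And>x. pmf p x \<le> c"
    and separated: "3 \<le> norm (\<alpha> ^ k) \<or> norm (\<alpha> ^ k) \<le> 1/3" and "\<alpha> \<noteq> 0"
  shows "measure_pmf.prob (Pi_pmf {..n} 0 (\<lambda>_. p)) {\<xi>. (\<Sum>j\<le>n. of_int (\<xi> j) * \<alpha> ^ j) = 0}
           \<le> c ^ Suc (n div k)"
proof -
  define m where "m = n div k"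
  have "0 < k"
    using separated by (cases k) auto
  have "m * k \<le> n"
    by (simp add: m_def div_times_less_eq_dividend)
  have support: "(\<forall>j\<le>n. \<zeta> j \<in> {-1, 0, 1}) \<and> (\<forall>j. \<not> j \<le> n \<longrightarrow> \<zeta> j = 0)"
    if "\<zeta> \<in> set_pmf (Pi_pmf {..n} 0 (\<lambda>_. p))" for \<zeta>
    using set_Pi_pmf_subset'[of "{..n}" 0 "\<lambda>_. p"] that assms(1) by (auto simp: PiE_dflt_def)
  have "measure_pmf.prob (Pi_pmf {..n} 0 (\<lambda>_. p)) {\<xi>. (\<Sum>j\<le>n. of_int (\<xi> j) * \<alpha> ^ j) = 0}
      \<le> c ^ card ((\<lambda>i. i * k) ` {..m})"
  proof (rule measure_Pi_pmf_le_if_determined_outside)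
    show "(\<lambda>i. i * k) ` {..m} \<subseteq> {..n}"
      using \<open>m * k \<le> n\<close> by (auto intro: order_trans[OF mult_le_mono1])
    fix \<xi> \<eta>
    assume \<xi>: "\<xi> \<in> {\<xi>. (\<Sum>j\<le>n. of_int (\<xi> j) * \<alpha> ^ j) = 0} \<inter> set_pmf (Pi_pmf {..n} 0 (\<lambda>_. p))"
      and \<eta>: "\<eta> \<in> {\<xi>. (\<Sum>j\<le>n. of_int (\<xi> j) * \<alpha> ^ j) = 0} \<inter> set_pmf (Pi_pmf {..n} 0 (\<lambda>_. p))"
      and agree: "\<forall>j\<in>{..n} - (\<lambda>i. i * k) ` {..m}. \<xi> j = \<eta> j"
    note \<xi>_support = support[OF IntD2[OF \<xi>]] and \<eta>_support = support[OF IntD2[OF \<eta>]]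
    have "\<forall>j\<le>n. \<xi> j = \<eta> j"
      using \<xi> \<eta> agree
      by (intro coeffs_eq_if_roots_agree_outside_multiples[OF separated assms(4) \<open>0 < k\<close> \<open>m * k \<le> n\<close>
            conjunct1[OF \<xi>_support] conjunct1[OF \<eta>_support]]) auto
    then show "\<xi> = \<eta>"
      using conjunct2[OF \<xi>_support] conjunct2[OF \<eta>_support] by (intro ext) metis
  qed (simp_all add: assms(2))
  also have "card ((\<lambda>i. i * k) ` {..m}) = Suc m"
    using \<open>0 < k\<close> by (simp add: card_image inj_on_def)
  finally show ?thesis
    by (simp add: m_def)
qed

theorem lemma1p5:
  fixes p :: "int pmf" and n :: nat and \<alpha> :: complex
  assumes "set_pmf p \<subseteq> {-1, 0, 1}"
    and "\<forall>x\<in>{-1, 0, 1}. pmf p x < 1 / sqrt 3"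
    and "n \<ge> 1"
    and "algebraic_int \<alpha>" and "\<alpha> \<noteq> 0"
  shows "measure_pmf.prob (Pi_pmf {..n} 0 (\<lambda>_. p))
           {\<xi>. (\<Sum>j\<le>n. of_int (\<xi> j) * \<alpha> ^ j) = 0}
         \<le> (if cmod \<alpha> = 1 then 1
            else exp (- (real n * ln 3) / (2 * real_of_int \<lceil>ln 3 / \<bar>ln (cmod \<alpha>)\<bar>\<rceil>)))"
proof (cases "cmod \<alpha> = 1")
  case False
  define q where "q = ln 3 / \<bar>ln (cmod \<alpha>)\<bar>"
  define k where "k = nat \<lceil>q\<rceil>"
  have "0 < \<bar>ln (cmod \<alpha>)\<bar>"
    using False assms(5) by simp
  then have "0 < q"
    by (simp add: q_def)
  then have "0 < k" "real k = real_of_int \<lceil>q\<rceil>" "q \<le> real k"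
    by (auto simp: k_def)
  then have "ln 3 \<le> real k * \<bar>ln (cmod \<alpha>)\<bar>"
    using \<open>0 < \<bar>ln (cmod \<alpha>)\<bar>\<close> by (simp only: q_def pos_divide_le_eq)
  then have separated: "3 \<le> cmod (\<alpha> ^ k) \<or> cmod (\<alpha> ^ k) \<le> 1/3"
    using ge_or_le_inverse_if_ln_le_abs_ln_power[of "cmod \<alpha>" 3 k] assms(5) by (simp add: norm_power)
  have "pmf p x \<le> 1 / sqrt 3" for x
    using assms(1,2) by (cases "x \<in> set_pmf p") (auto simp: set_pmf_iff)
  then have "measure_pmf.prob (Pi_pmf {..n} 0 (\<lambda>_. p)) {\<xi>. (\<Sum>j\<le>n. of_int (\<xi> j) * \<alpha> ^ j) = 0}
      \<le> (1 / sqrt 3) ^ Suc (n div k)"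
    using measure_root_le_power_Suc_div[OF assms(1) _ separated assms(5)] by blast
  also have "\<dots> \<le> (1 / sqrt 3) powr (real n / real k)"
    using \<open>0 < k\<close> by (intro power_Suc_div_le_powr) auto
  also have "\<dots> = exp (- (real n * ln 3) / (2 * real k))"
    by (simp add: powr_def ln_div ln_sqrt)
  finally show ?thesis
    using False \<open>real k = real_of_int \<lceil>q\<rceil>\<close> by (simp add: q_def)
qed simp

end
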